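(* $\mathfrak{mc}((\mathsf{Borel}(2^\omega)/\mathsf{null})^-)=\mathfrak{mc}((\mathsf{Borel}(2^\omega)/\mathsf{meager})^-)=\mathfrak{c}$.
   Context: $\mathsf{null}$ and $\mathsf{meager}$ are the ideals of Lebesgue null and of meager subsets of $2^\omega$; $\mathsf{Borel}(2^\omega)/\mathcal{J}$ is the Boolean algebra of Borel subsets of $2^\omega$ modulo the ideal $\mathcal{J}$. For a Boolean algebra $B$, $B^-=B\setminus\{0,1\}$ ordered by the Boolean order. For a poset $P$, a chain is a set of pairwise comparable elements and $\mathfrak{mc}(P)$ is the minimal cardinality of a maximal (under inclusion) chain. $\mathfrak{c}=2^{\aleph_0}$. *)

theory Defs
  imports "HOL-Probability.Probability"
begin


text \<open>Cantor space 2^omega is modelled as the type nat => bool, with the product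
  topology of discrete two-point spaces.\<close>

definition cantor_top :: "(nat \<Rightarrow> bool) topology" where
  "cantor_top = product_topology (\<lambda>_. discrete_topology (UNIV :: bool set)) UNIV"

definition borel_cantor :: "(nat \<Rightarrow> bool) set set" where
  "borel_cantor = sigma_sets UNIV {U. openin cantor_top U}"

text \<open>Lebesgue (coin-flipping) measure on 2^omega.\<close>
definition cantor_measure :: "(nat \<Rightarrow> bool) measure" where
  "cantor_measure = (\<Pi>\<^sub>M i\<in>(UNIV :: nat set). measure_pmf (bernoulli_pmf (1/2)))"

definition null_ideal :: "(nat \<Rightarrow> bool) set set" where
  "null_ideal = {A. \<exists>B \<in> null_sets cantor_measure. A \<subseteq> B}"

definition nowhere_dense :: "(nat \<Rightarrow> bool) set \<Rightarrow> bool" where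
  "nowhere_dense A \<longleftrightarrow> cantor_top interior_of (cantor_top closure_of A) = {}"

definition meager_ideal :: "(nat \<Rightarrow> bool) set set" where
  "meager_ideal = {A. \<exists>F. countable F \<and> (\<forall>N\<in>F. nowhere_dense N) \<and> A \<subseteq> \<Union>F}"

definition quot_class :: "(nat \<Rightarrow> bool) set set \<Rightarrow> (nat \<Rightarrow> bool) set \<Rightarrow> (nat \<Rightarrow> bool) set set" where
  "quot_class J A = {B \<in> borel_cantor. (A - B) \<union> (B - A) \<in> J}"

definition quot_alg :: "(nat \<Rightarrow> bool) set set \<Rightarrow> (nat \<Rightarrow> bool) set set set" where
  "quot_alg J = quot_class J ` borel_cantor"

definition quot_le :: "(nat \<Rightarrow> bool) set set \<Rightarrow> (nat \<Rightarrow> bool) set set \<Rightarrow> (nat \<Rightarrow> bool) set set \<Rightarrow> bool" where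
  "quot_le J C D \<longleftrightarrow> (\<exists>A\<in>C. \<exists>B\<in>D. A - B \<in> J)"

text \<open>B^- = B minus {0,1}.\<close>
definition quot_minus :: "(nat \<Rightarrow> bool) set set \<Rightarrow> (nat \<Rightarrow> bool) set set set" where
  "quot_minus J = quot_alg J - {quot_class J {}, quot_class J UNIV}"

definition is_chain :: "'a set \<Rightarrow> ('a \<Rightarrow> 'a \<Rightarrow> bool) \<Rightarrow> 'a set \<Rightarrow> bool" where
  "is_chain P le C \<longleftrightarrow> C \<subseteq> P \<and> (\<forall>x\<in>C. \<forall>y\<in>C. le x y \<or> le y x)"

definition is_maximal_chain :: "'a set \<Rightarrow> ('a \<Rightarrow> 'a \<Rightarrow> bool) \<Rightarrow> 'a set \<Rightarrow> bool" where
  "is_maximal_chain P le C \<longleftrightarrow> is_chain P le C \<and> (\<forall>D. is_chain P le D \<and> C \<subseteq> D \<longrightarrow> D = C)"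

text \<open>mc(P) = |K|: the minimum of the cardinalities of maximal chains equals |K|.\<close>
definition mc_equals :: "'a set \<Rightarrow> ('a \<Rightarrow> 'a \<Rightarrow> bool) \<Rightarrow> 'b set \<Rightarrow> bool" where
  "mc_equals P le K \<longleftrightarrow>
     (\<exists>C. is_maximal_chain P le C \<and> (card_of C, card_of K) \<in> ordIso) \<and>
     (\<forall>C. is_maximal_chain P le C \<longrightarrow> (card_of K, card_of C) \<in> ordLeq)"

end

theory Submission
  imports Defs
begin

unbundle cardinal_syntax

(* Let J be the null or the meager ideal and C a maximal chain of (Borel/J)^-.
   Since Borel/J is atomless, maximality forces C to be dense, and since Borel/J is complete,
   maximality forces C to contain the supremum of every subset of C that is bounded in C.
   Splitting intervals of C along the binary tree, with a gap between the two halves, and taking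
   the supremum along each branch therefore embeds 2^omega into C, so |C| >= c.
   Conversely, two comparable Borel sets of the same measure are equivalent modulo null, and every
   Borel set is equivalent modulo meager to an open set (Baire property); measures and open sets are
   coded by elements of 2^omega, so |C| <= c. *)

section \<open>Cantor space\<close>

lemma sigma_algebra_borel_cantor: "sigma_algebra UNIV borel_cantor"
  unfolding borel_cantor_def by (rule sigma_algebra_sigma_sets) auto

interpretation borel_cantor: sigma_algebra UNIV borel_cantor
  by (rule sigma_algebra_borel_cantor)

lemma openin_imp_borel_cantor: "openin cantor_top U \<Longrightarrow> U \<in> borel_cantor"
  unfolding borel_cantor_def by (auto intro: sigma_sets.Basic)

lemma topspace_cantor_top [simp]: "topspace cantor_top = UNIV"
  unfolding cantor_top_def by (simp add: topspace_product_topology)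

lemma coordinate_borel_cantor: "{x. x n} \<in> borel_cantor"
proof -
  have "continuous_map cantor_top (discrete_topology UNIV) (\<lambda>x. x n)"
    unfolding cantor_top_def by (rule continuous_map_product_projection) simp
  from openin_continuous_map_preimage[OF this, of "{True}"] show ?thesis
    by (simp add: openin_imp_borel_cantor)
qed

definition cyl :: "bool list \<Rightarrow> (nat \<Rightarrow> bool) set" where
  "cyl l = {x. \<forall>i<length l. x i = l ! i}"

lemma openin_cantor_top_eq_Union_cyl:
  assumes "openin cantor_top U"
  shows "U = \<Union>(cyl ` {l. cyl l \<subseteq> U})"
proof
  show "U \<subseteq> \<Union>(cyl ` {l. cyl l \<subseteq> U})"
  proof
    fix x assume "x \<in> U"
    with assms obtain V where V: "finite {i. V i \<noteq> UNIV}" "x \<in> Pi\<^sub>E UNIV V" "Pi\<^sub>E UNIV V \<subseteq> U"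
      unfolding cantor_top_def openin_product_topology_alt by auto
    obtain N where N: "{i. V i \<noteq> UNIV} \<subseteq> {..<N}"
      using finite_nat_bounded[OF V(1)] by blast
    have "cyl (map x [0..<N]) \<subseteq> Pi\<^sub>E UNIV V"
      using V(2) N by (fastforce simp: cyl_def PiE_def Pi_def)
    moreover have "x \<in> cyl (map x [0..<N])"
      by (simp add: cyl_def)
    ultimately show "x \<in> \<Union>(cyl ` {l. cyl l \<subseteq> U})"
      using V(3) by blast
  qed
qed auto

lemma not_openin_singleton: "\<not> openin cantor_top {x}"
proof
  assume "openin cantor_top {x}"
  from openin_cantor_top_eq_Union_cyl[OF this] obtain l where "x \<in> cyl l" "cyl l \<subseteq> {x}"
    by blast
  moreover have "x(length l := \<not> x (length l)) \<in> cyl l"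
    using \<open>x \<in> cyl l\<close> by (simp add: cyl_def)
  ultimately show False
    by (metis fun_upd_same singletonD subsetD)
qed

section \<open>Quotients of the Borel algebra by a complete $\sigma$-ideal\<close>

definition is_lub_mod ::
    "(nat \<Rightarrow> bool) set set \<Rightarrow> (nat \<Rightarrow> bool) set set \<Rightarrow> (nat \<Rightarrow> bool) set \<Rightarrow> bool" where
  "is_lub_mod J S U \<longleftrightarrow> U \<in> borel_cantor \<and> (\<forall>A\<in>S. A - U \<in> J) \<and>
     (\<forall>B\<in>borel_cantor. (\<forall>A\<in>S. A - B \<in> J) \<longrightarrow> U - B \<in> J)"

locale cantor_quotient =
  fixes J :: "(nat \<Rightarrow> bool) set set"
  assumes ideal_subset: "A \<in> J \<Longrightarrow> B \<subseteq> A \<Longrightarrow> B \<in> J"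
    and ideal_countable_Union: "countable F \<Longrightarrow> F \<subseteq> J \<Longrightarrow> \<Union>F \<in> J"
    and singleton_in_ideal: "{x} \<in> J"
    and UNIV_notin_ideal: "UNIV \<notin> J"
    and ex_lub_mod: "S \<subseteq> borel_cantor \<Longrightarrow> \<exists>U. is_lub_mod J S U"
    and ex_comparable_code: "\<exists>h :: (nat \<Rightarrow> bool) set \<Rightarrow> nat \<Rightarrow> bool.
           \<forall>A\<in>borel_cantor. \<forall>B\<in>borel_cantor. (A - B \<in> J \<or> B - A \<in> J) \<longrightarrow> h A = h B \<longrightarrow>
             A - B \<in> J \<and> B - A \<in> J"
begin

abbreviation le_mod :: "(nat \<Rightarrow> bool) set \<Rightarrow> (nat \<Rightarrow> bool) set \<Rightarrow> bool" (infix \<open>\<subseteq>\<^sub>J\<close> 50)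
  where "A \<subseteq>\<^sub>J B \<equiv> A - B \<in> J"

abbreviation less_mod :: "(nat \<Rightarrow> bool) set \<Rightarrow> (nat \<Rightarrow> bool) set \<Rightarrow> bool" (infix \<open>\<subset>\<^sub>J\<close> 50)
  where "A \<subset>\<^sub>J B \<equiv> A \<subseteq>\<^sub>J B \<and> \<not> B \<subseteq>\<^sub>J A"

lemma empty_in_ideal [simp]: "{} \<in> J"
  using ideal_subset singleton_in_ideal by blast

lemma ideal_Un: "A \<in> J \<Longrightarrow> B \<in> J \<Longrightarrow> A \<union> B \<in> J"
  using ideal_countable_Union[of "{A, B}"] by auto

lemma ideal_subset_Un: "X \<subseteq> A \<union> B \<Longrightarrow> A \<in> J \<Longrightarrow> B \<in> J \<Longrightarrow> X \<in> J"
  using ideal_Un ideal_subset by blast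

lemma le_mod_trans: "A \<subseteq>\<^sub>J B \<Longrightarrow> B \<subseteq>\<^sub>J C \<Longrightarrow> A \<subseteq>\<^sub>J C"
  by (rule ideal_subset_Un[of _ "A - B" "B - C"]) auto

lemma le_mod_in_ideal: "B \<subseteq>\<^sub>J A \<Longrightarrow> A \<in> J \<Longrightarrow> B \<in> J"
  by (rule ideal_subset_Un[of _ "B - A" A]) auto

lemma le_mod_compl_in_ideal: "A \<subseteq>\<^sub>J B \<Longrightarrow> UNIV - A \<in> J \<Longrightarrow> UNIV - B \<in> J"
  by (rule ideal_subset_Un[of _ "UNIV - A" "A - B"]) auto

lemma less_mod_imp_notin_ideal: "A \<subset>\<^sub>J B \<Longrightarrow> B \<notin> J"
  using ideal_subset[of B "B - A"] by blast

lemma less_mod_imp_compl_notin_ideal: "A \<subset>\<^sub>J B \<Longrightarrow> UNIV - A \<notin> J"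
  using ideal_subset[of "UNIV - A" "B - A"] by blast

lemma mem_quot_class_self: "A \<in> borel_cantor \<Longrightarrow> A \<in> quot_class J A"
  unfolding quot_class_def by auto

lemma mem_quot_class_iff: "B \<in> quot_class J A \<longleftrightarrow> B \<in> borel_cantor \<and> A \<subseteq>\<^sub>J B \<and> B \<subseteq>\<^sub>J A"
  unfolding quot_class_def by (auto intro: ideal_Un elim: ideal_subset)

lemma quot_class_eq_iff:
  assumes "A \<in> borel_cantor" "B \<in> borel_cantor"
  shows "quot_class J A = quot_class J B \<longleftrightarrow> A \<subseteq>\<^sub>J B \<and> B \<subseteq>\<^sub>J A"
proof
  assume "quot_class J A = quot_class J B"
  then show "A \<subseteq>\<^sub>J B \<and> B \<subseteq>\<^sub>J A"
    using mem_quot_class_self[OF assms(1)] mem_quot_class_iff by blast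
next
  assume AB: "A \<subseteq>\<^sub>J B \<and> B \<subseteq>\<^sub>J A"
  show "quot_class J A = quot_class J B"
    unfolding set_eq_iff mem_quot_class_iff
    using AB le_mod_trans[of A B] le_mod_trans[of B A] le_mod_trans[of _ A B] le_mod_trans[of _ B A]
    by blast
qed

lemma quot_le_quot_class_iff:
  assumes "A \<in> borel_cantor" "B \<in> borel_cantor"
  shows "quot_le J (quot_class J A) (quot_class J B) \<longleftrightarrow> A \<subseteq>\<^sub>J B"
proof
  assume "quot_le J (quot_class J A) (quot_class J B)"
  then obtain A' B' where "A \<subseteq>\<^sub>J A'" "A' \<subseteq>\<^sub>J B'" "B' \<subseteq>\<^sub>J B"
    unfolding quot_le_def Bex_def mem_quot_class_iff by blast
  then show "A \<subseteq>\<^sub>J B"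
    using le_mod_trans by blast
next
  assume "A \<subseteq>\<^sub>J B"
  then show "quot_le J (quot_class J A) (quot_class J B)"
    unfolding quot_le_def using assms mem_quot_class_self by blast
qed

lemma quot_class_in_quot_minus_iff:
  "A \<in> borel_cantor \<Longrightarrow> quot_class J A \<in> quot_minus J \<longleftrightarrow> A \<notin> J \<and> UNIV - A \<notin> J"
  unfolding quot_minus_def quot_alg_def using quot_class_eq_iff[of A "{}"] quot_class_eq_iff[of A UNIV]
  by auto

lemma quot_minus_cases:
  assumes "c \<in> quot_minus J"
  obtains A where "A \<in> borel_cantor" "c = quot_class J A"
  using assms unfolding quot_minus_def quot_alg_def by auto

text \<open>If no Borel subset splits $A$, then modulo $J$ every coordinate is constant on $A$,
  so $A$ is contained in a singleton modulo $J$.\<close>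

lemma ex_borel_split:
  assumes A: "A \<in> borel_cantor" "A \<notin> J"
  shows "\<exists>E\<in>borel_cantor. E \<subseteq> A \<and> E \<notin> J \<and> A - E \<notin> J"
proof (rule ccontr)
  assume no_split: "\<not> ?thesis"
  define b where "b n = (A - {x. x n} \<in> J)" for n
  have "A \<inter> {x. x n \<noteq> b n} \<in> J" for n
  proof -
    have "A \<inter> {x. x n} \<in> borel_cantor"
      using A(1) coordinate_borel_cantor by blast
    moreover have "A - (A \<inter> {x. x n}) = A - {x. x n}"
      by blast
    ultimately have "A \<inter> {x. x n} \<in> J \<or> A - {x. x n} \<in> J"
      using no_split by force
    then show ?thesis
      unfolding b_def by (cases "A - {x. x n} \<in> J") (auto elim: ideal_subset)
  qed
  then have "(\<Union>n. A \<inter> {x. x n \<noteq> b n}) \<in> J"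
    by (intro ideal_countable_Union) auto
  moreover have "A \<subseteq> {b} \<union> (\<Union>n. A \<inter> {x. x n \<noteq> b n})"
    by auto
  ultimately show False
    using ideal_subset_Un singleton_in_ideal A(2) by blast
qed

lemma ex_less_mod_between:
  assumes "a \<in> borel_cantor" "b \<in> borel_cantor" "a \<subset>\<^sub>J b"
  shows "\<exists>m\<in>borel_cantor. a \<subset>\<^sub>J m \<and> m \<subset>\<^sub>J b"
proof -
  have "b - a \<in> borel_cantor" "b - a \<notin> J"
    using assms by auto
  then obtain E where E: "E \<in> borel_cantor" "E \<subseteq> b - a" "E \<notin> J" "(b - a) - E \<notin> J"
    using ex_borel_split by blast
  have "a - (a \<union> E) \<in> J"
    by (simp add: Diff_Un)
  moreover have "(a \<union> E) - a = E" "(a \<union> E) - b = a - b" "b - (a \<union> E) = (b - a) - E"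
    using E(2) by auto
  ultimately have "a \<subset>\<^sub>J a \<union> E \<and> a \<union> E \<subset>\<^sub>J b"
    using E assms(3) by simp
  moreover have "a \<union> E \<in> borel_cantor"
    using assms(1) E(1) by blast
  ultimately show ?thesis
    by blast
qed

end

section \<open>Maximal chains of the quotient\<close>

lemma ex_maximal_chain: "\<exists>C. is_maximal_chain P le C"
proof -
  let ?A = "{D. is_chain P le D}"
  have "\<Union>\<C> \<in> ?A" if "\<C> \<in> chains ?A" for \<C>
  proof -
    have sub: "\<C> \<subseteq> ?A" and cmp: "\<forall>X\<in>\<C>. \<forall>Y\<in>\<C>. X \<subseteq> Y \<or> Y \<subseteq> X"
      using that unfolding chains_def chain_subset_def by auto
    show ?thesis unfolding mem_Collect_eq is_chain_def
    proof (intro conjI ballI)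
      show "\<Union>\<C> \<subseteq> P"
        using sub unfolding is_chain_def by blast
      fix x y assume "x \<in> \<Union>\<C>" "y \<in> \<Union>\<C>"
      then have "\<exists>Z\<in>\<C>. x \<in> Z \<and> y \<in> Z"
        using cmp by blast
      then show "le x y \<or> le y x"
        using sub unfolding is_chain_def by blast
    qed
  qed
  from Zorn_Lemma[OF ballI[OF this]] obtain M where "M \<in> ?A" "\<forall>X\<in>?A. M \<subseteq> X \<longrightarrow> X = M"
    by blast
  then show ?thesis unfolding is_maximal_chain_def by blast
qed

locale quotient_maximal_chain = cantor_quotient +
  fixes C :: "(nat \<Rightarrow> bool) set set set"
  assumes maximal_chain: "is_maximal_chain (quot_minus J) (quot_le J) C"
begin

definition chain_sets :: "(nat \<Rightarrow> bool) set set" where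
  "chain_sets = {A \<in> borel_cantor. quot_class J A \<in> C}"

lemma chain_subset_quot_minus: "C \<subseteq> quot_minus J"
  using maximal_chain unfolding is_maximal_chain_def is_chain_def by blast

lemma chain_sets_borel: "A \<in> chain_sets \<Longrightarrow> A \<in> borel_cantor"
  unfolding chain_sets_def by auto

lemma chain_sets_comparable: "A \<in> chain_sets \<Longrightarrow> B \<in> chain_sets \<Longrightarrow> A \<subseteq>\<^sub>J B \<or> B \<subseteq>\<^sub>J A"
  using maximal_chain quot_le_quot_class_iff unfolding is_maximal_chain_def is_chain_def chain_sets_def
  by blast

lemma chain_sets_nontrivial: "A \<in> chain_sets \<Longrightarrow> A \<notin> J \<and> UNIV - A \<notin> J"
  using chain_subset_quot_minus quot_class_in_quot_minus_iff unfolding chain_sets_def by blast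

lemma chain_cases:
  assumes "c \<in> C"
  obtains A where "A \<in> chain_sets" "c = quot_class J A"
  using assms chain_subset_quot_minus quot_minus_cases unfolding chain_sets_def by blast

lemma mem_chain_setsI:
  assumes m: "m \<in> borel_cantor" "m \<notin> J" "UNIV - m \<notin> J"
    and comparable: "\<forall>c\<in>chain_sets. m \<subseteq>\<^sub>J c \<or> c \<subseteq>\<^sub>J m"
  shows "m \<in> chain_sets"
proof -
  let ?D = "insert (quot_class J m) C"
  have "quot_le J (quot_class J m) c \<or> quot_le J c (quot_class J m)" if "c \<in> C" for c
    using that comparable quot_le_quot_class_iff m(1) chain_sets_borel by (elim chain_cases) blast
  moreover have "quot_le J (quot_class J m) (quot_class J m)"
    using quot_le_quot_class_iff m(1) by simp
  ultimately have "is_chain (quot_minus J) (quot_le J) ?D"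
    using maximal_chain chain_subset_quot_minus quot_class_in_quot_minus_iff m
    unfolding is_maximal_chain_def is_chain_def by auto
  then have "?D = C"
    using maximal_chain unfolding is_maximal_chain_def by blast
  then show ?thesis
    using m(1) unfolding chain_sets_def by auto
qed

lemma ex_chain_set_between:
  assumes ab: "a \<in> borel_cantor" "b \<in> borel_cantor" "a \<subset>\<^sub>J b"
    and comparable: "\<forall>c\<in>chain_sets. (c \<subseteq>\<^sub>J a \<or> a \<subseteq>\<^sub>J c) \<and> (c \<subseteq>\<^sub>J b \<or> b \<subseteq>\<^sub>J c)"
  shows "\<exists>c\<in>chain_sets. a \<subset>\<^sub>J c \<and> c \<subset>\<^sub>J b"
proof (rule ccontr)
  assume none: "\<not> ?thesis"
  obtain m where m: "m \<in> borel_cantor" "a \<subset>\<^sub>J m" "m \<subset>\<^sub>J b"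
    using ex_less_mod_between[OF ab] by blast
  have "m \<subseteq>\<^sub>J c \<or> c \<subseteq>\<^sub>J m" if "c \<in> chain_sets" for c
    using that comparable none m le_mod_trans[of c a m] le_mod_trans[of m b c] by blast
  then have "m \<in> chain_sets"
    using mem_chain_setsI m less_mod_imp_notin_ideal less_mod_imp_compl_notin_ideal by blast
  with none m show False
    by blast
qed

lemma ex_chain_set_between_chain_sets:
  "a \<in> chain_sets \<Longrightarrow> b \<in> chain_sets \<Longrightarrow> a \<subset>\<^sub>J b \<Longrightarrow> \<exists>c\<in>chain_sets. a \<subset>\<^sub>J c \<and> c \<subset>\<^sub>J b"
  using ex_chain_set_between chain_sets_borel chain_sets_comparable by meson

lemma ex_two_chain_sets: "\<exists>a b. a \<in> chain_sets \<and> b \<in> chain_sets \<and> a \<subset>\<^sub>J b"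
proof -
  have "\<exists>c\<in>chain_sets. {} \<subset>\<^sub>J c \<and> c \<subset>\<^sub>J UNIV"
    by (rule ex_chain_set_between) (use UNIV_notin_ideal in auto)
  then obtain a where a: "a \<in> chain_sets" "a \<subset>\<^sub>J UNIV"
    by blast
  have "\<exists>c\<in>chain_sets. a \<subset>\<^sub>J c \<and> c \<subset>\<^sub>J UNIV"
    by (rule ex_chain_set_between) (use a chain_sets_borel chain_sets_comparable in auto)
  then show ?thesis
    using a by blast
qed

lemma lub_mem_chain_sets:
  assumes S: "S \<subseteq> chain_sets" and U: "is_lub_mod J S U"
    and bounds: "a \<in> chain_sets" "b \<in> chain_sets" "a \<subseteq>\<^sub>J U" "U \<subseteq>\<^sub>J b"
  shows "U \<in> chain_sets"
proof (rule mem_chain_setsI)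
  show "U \<in> borel_cantor"
    using U unfolding is_lub_mod_def by blast
  show "U \<notin> J" "UNIV - U \<notin> J"
    using bounds chain_sets_nontrivial le_mod_in_ideal le_mod_compl_in_ideal by blast+
  show "\<forall>c\<in>chain_sets. U \<subseteq>\<^sub>J c \<or> c \<subseteq>\<^sub>J U"
  proof
    fix c assume c: "c \<in> chain_sets"
    show "U \<subseteq>\<^sub>J c \<or> c \<subseteq>\<^sub>J U"
    proof (cases "\<forall>A\<in>S. A \<subseteq>\<^sub>J c")
      case True
      then show ?thesis
        using U c chain_sets_borel unfolding is_lub_mod_def by blast
    next
      case False
      then obtain A where "A \<in> S" "c \<subseteq>\<^sub>J A"
        using S c chain_sets_comparable by blast
      then show ?thesis
        using U le_mod_trans unfolding is_lub_mod_def by blast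
    qed
  qed
qed

definition mid :: "(nat \<Rightarrow> bool) set \<Rightarrow> (nat \<Rightarrow> bool) set \<Rightarrow> (nat \<Rightarrow> bool) set" where
  "mid a b = (SOME c. c \<in> chain_sets \<and> a \<subset>\<^sub>J c \<and> c \<subset>\<^sub>J b)"

lemma mid_between:
  "a \<in> chain_sets \<Longrightarrow> b \<in> chain_sets \<Longrightarrow> a \<subset>\<^sub>J b \<Longrightarrow>
     mid a b \<in> chain_sets \<and> a \<subset>\<^sub>J mid a b \<and> mid a b \<subset>\<^sub>J b"
  unfolding mid_def by (rule someI_ex) (use ex_chain_set_between_chain_sets in blast)

lemma mid_mid_between:
  assumes "a \<in> chain_sets" "b \<in> chain_sets" "a \<subset>\<^sub>J b"
  shows "mid a b \<in> chain_sets \<and> mid (mid a b) b \<in> chain_sets \<and>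
    a \<subset>\<^sub>J mid a b \<and> mid a b \<subset>\<^sub>J mid (mid a b) b \<and> mid (mid a b) b \<subset>\<^sub>J b"
  using mid_between[OF assms] mid_between[of "mid a b" b] assms by blast

context
  fixes lo hi :: "(nat \<Rightarrow> bool) set"
  assumes lo: "lo \<in> chain_sets" and hi: "hi \<in> chain_sets" and lo_hi: "lo \<subset>\<^sub>J hi"
begin

text \<open>Nested intervals of the chain indexed by the nodes of the binary tree: at each node the
  interval $[a, b]$ is split into $[a, c]$ and $[d, b]$ with $a \<subset> c \<subset> d \<subset> b$, so the
  two halves are separated by a gap.\<close>

primrec interval :: "(nat \<Rightarrow> bool) \<Rightarrow> nat \<Rightarrow> (nat \<Rightarrow> bool) set \<times> (nat \<Rightarrow> bool) set" where
  "interval x 0 = (lo, hi)"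
| "interval x (Suc n) =
     (let a = fst (interval x n); b = snd (interval x n)
      in if x n then (mid (mid a b) b, b) else (a, mid a b))"

lemma interval_in_chain_sets:
  "fst (interval x n) \<in> chain_sets \<and> snd (interval x n) \<in> chain_sets \<and>
   fst (interval x n) \<subset>\<^sub>J snd (interval x n)"
proof (induction n)
  case 0
  show ?case
    using lo hi lo_hi by simp
next
  case (Suc n)
  then show ?case
    using mid_mid_between[of "fst (interval x n)" "snd (interval x n)"] by (simp add: Let_def)
qed

lemma interval_Suc_le_mod:
  "fst (interval x n) \<subseteq>\<^sub>J fst (interval x (Suc n)) \<and> snd (interval x (Suc n)) \<subseteq>\<^sub>J snd (interval x n)"
proof -
  let ?a = "fst (interval x n)" and ?b = "snd (interval x n)"
  have "?a \<subseteq>\<^sub>J mid (mid ?a ?b) ?b" "mid ?a ?b \<subseteq>\<^sub>J ?b"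
    using mid_mid_between[of ?a ?b] interval_in_chain_sets[of x n] le_mod_trans by blast+
  then show ?thesis
    by (simp add: Let_def)
qed

lemma interval_add_le_mod:
  "fst (interval x n) \<subseteq>\<^sub>J fst (interval x (n + k)) \<and> snd (interval x (n + k)) \<subseteq>\<^sub>J snd (interval x n)"
proof (induction k)
  case (Suc k)
  then show ?case
    using interval_Suc_le_mod[of x "n + k"] le_mod_trans by auto
qed simp

lemma fst_interval_le_mod_snd_interval: "fst (interval x n) \<subseteq>\<^sub>J snd (interval x k)"
proof -
  have "fst (interval x n) \<subseteq>\<^sub>J fst (interval x (n + k))"
    using interval_add_le_mod by blast
  moreover have "fst (interval x (n + k)) \<subseteq>\<^sub>J snd (interval x (k + n))"
    using interval_in_chain_sets by (simp add: add.commute)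
  moreover have "snd (interval x (k + n)) \<subseteq>\<^sub>J snd (interval x k)"
    using interval_add_le_mod by blast
  ultimately show ?thesis
    using le_mod_trans by blast
qed

definition branch_lub :: "(nat \<Rightarrow> bool) \<Rightarrow> (nat \<Rightarrow> bool) set" where
  "branch_lub x = (SOME U. is_lub_mod J (range (\<lambda>n. fst (interval x n))) U)"

lemma is_lub_mod_branch_lub: "is_lub_mod J (range (\<lambda>n. fst (interval x n))) (branch_lub x)"
proof -
  have "range (\<lambda>n. fst (interval x n)) \<subseteq> borel_cantor"
    using interval_in_chain_sets chain_sets_borel by blast
  then show ?thesis
    unfolding branch_lub_def by (rule someI_ex[OF ex_lub_mod])
qed

lemma fst_interval_le_mod_branch_lub: "fst (interval x n) \<subseteq>\<^sub>J branch_lub x"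
  using is_lub_mod_branch_lub unfolding is_lub_mod_def by blast

lemma branch_lub_le_mod_snd_interval: "branch_lub x \<subseteq>\<^sub>J snd (interval x n)"
proof -
  have "snd (interval x n) \<in> borel_cantor"
    using interval_in_chain_sets chain_sets_borel by blast
  moreover have "\<forall>A\<in>range (\<lambda>k. fst (interval x k)). A \<subseteq>\<^sub>J snd (interval x n)"
    using fst_interval_le_mod_snd_interval by blast
  ultimately show ?thesis
    using is_lub_mod_branch_lub unfolding is_lub_mod_def by blast
qed

lemma branch_lub_in_chain_sets: "branch_lub x \<in> chain_sets"
  by (rule lub_mem_chain_sets[OF _ is_lub_mod_branch_lub lo hi])
    (use interval_in_chain_sets fst_interval_le_mod_branch_lub[of x 0]
      branch_lub_le_mod_snd_interval[of x 0] in auto)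

lemma branch_lub_separated:
  assumes "interval x n = interval y n" "\<not> x n" "y n"
  shows "\<not> branch_lub y \<subseteq>\<^sub>J branch_lub x"
proof
  assume yx: "branch_lub y \<subseteq>\<^sub>J branch_lub x"
  let ?a = "fst (interval x n)" and ?b = "snd (interval x n)"
  have "mid (mid ?a ?b) ?b \<subseteq>\<^sub>J branch_lub y"
    using fst_interval_le_mod_branch_lub[of y "Suc n"] assms by (simp add: Let_def)
  moreover have "branch_lub x \<subseteq>\<^sub>J mid ?a ?b"
    using branch_lub_le_mod_snd_interval[of x "Suc n"] assms by (simp add: Let_def)
  ultimately have "mid (mid ?a ?b) ?b \<subseteq>\<^sub>J mid ?a ?b"
    using yx le_mod_trans by blast
  then show False
    using mid_mid_between[of ?a ?b] interval_in_chain_sets[of x n] by blast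
qed

lemma inj_branch_lub_class: "inj (\<lambda>x. quot_class J (branch_lub x))"
proof (rule injI, rule ccontr)
  fix x y assume eq: "quot_class J (branch_lub x) = quot_class J (branch_lub y)" and "x \<noteq> y"
  then obtain k where "x k \<noteq> y k"
    by auto
  define n where "n = (LEAST n. x n \<noteq> y n)"
  have "x n \<noteq> y n"
    unfolding n_def by (rule LeastI) fact
  moreover have "interval x k = interval y k" if "k \<le> n" for k
    using that
  proof (induction k)
    case (Suc k)
    then have "x k = y k"
      using not_less_Least[of k "\<lambda>n. x n \<noteq> y n"] unfolding n_def by simp
    with Suc show ?case
      by (simp add: Let_def)
  qed simp
  ultimately have "\<not> branch_lub y \<subseteq>\<^sub>J branch_lub x \<or> \<not> branch_lub x \<subseteq>\<^sub>J branch_lub y"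
    using branch_lub_separated[of x n y] branch_lub_separated[of y n x] by (cases "x n") auto
  moreover have "branch_lub x \<in> borel_cantor" "branch_lub y \<in> borel_cantor"
    using branch_lub_in_chain_sets chain_sets_borel by blast+
  ultimately show False
    using eq quot_class_eq_iff[of "branch_lub x" "branch_lub y"] by blast
qed

end

lemma UNIV_ordLeq_chain: "|UNIV :: (nat \<Rightarrow> bool) set| \<le>o |C|"
proof -
  obtain lo hi where "lo \<in> chain_sets" "hi \<in> chain_sets" "lo \<subset>\<^sub>J hi"
    using ex_two_chain_sets by blast
  then have "inj (\<lambda>x. quot_class J (branch_lub lo hi x))"
    and "range (\<lambda>x. quot_class J (branch_lub lo hi x)) \<subseteq> C"
    using inj_branch_lub_class branch_lub_in_chain_sets unfolding chain_sets_def by auto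
  then show ?thesis
    using card_of_ordLeq by blast
qed

lemma chain_ordLeq_UNIV: "|C| \<le>o |UNIV :: (nat \<Rightarrow> bool) set|"
proof -
  obtain h :: "(nat \<Rightarrow> bool) set \<Rightarrow> nat \<Rightarrow> bool" where h:
    "\<forall>A\<in>borel_cantor. \<forall>B\<in>borel_cantor. (A \<subseteq>\<^sub>J B \<or> B \<subseteq>\<^sub>J A) \<longrightarrow> h A = h B \<longrightarrow> A \<subseteq>\<^sub>J B \<and> B \<subseteq>\<^sub>J A"
    using ex_comparable_code by blast
  define rep where "rep c = (SOME A. A \<in> chain_sets \<and> c = quot_class J A)" for c
  have rep: "rep c \<in> chain_sets \<and> c = quot_class J (rep c)" if "c \<in> C" for c
    unfolding rep_def by (rule someI_ex) (use that chain_cases in metis)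
  have "inj_on (\<lambda>c. h (rep c)) C"
  proof (rule inj_onI)
    fix c d assume c: "c \<in> C" and d: "d \<in> C" and "h (rep c) = h (rep d)"
    moreover have "rep c \<in> borel_cantor" "rep d \<in> borel_cantor"
      using rep[OF c] rep[OF d] chain_sets_borel by blast+
    moreover have "rep c \<subseteq>\<^sub>J rep d \<or> rep d \<subseteq>\<^sub>J rep c"
      using rep[OF c] rep[OF d] chain_sets_comparable by blast
    ultimately have "rep c \<subseteq>\<^sub>J rep d \<and> rep d \<subseteq>\<^sub>J rep c"
      using h by blast
    then show "c = d"
      using quot_class_eq_iff[of "rep c" "rep d"] rep[OF c] rep[OF d] \<open>rep c \<in> borel_cantor\<close>
        \<open>rep d \<in> borel_cantor\<close> by metis
  qed
  then show ?thesis
    using card_of_ordLeq by blast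
qed

end

lemma (in cantor_quotient) mc_equals_continuum:
  "mc_equals (quot_minus J) (quot_le J) (UNIV :: (nat \<Rightarrow> bool) set)"
proof -
  have chain: "quotient_maximal_chain J C" if "is_maximal_chain (quot_minus J) (quot_le J) C" for C
    by (intro quotient_maximal_chain.intro cantor_quotient_axioms quotient_maximal_chain_axioms.intro that)
  obtain C where C: "is_maximal_chain (quot_minus J) (quot_le J) C"
    using ex_maximal_chain by blast
  then have "|C| =o |UNIV :: (nat \<Rightarrow> bool) set|"
    using chain quotient_maximal_chain.UNIV_ordLeq_chain quotient_maximal_chain.chain_ordLeq_UNIV
      ordIso_iff_ordLeq by blast
  then show ?thesis
    unfolding mc_equals_def using C chain quotient_maximal_chain.UNIV_ordLeq_chain by blast
qed

section \<open>The null ideal\<close>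

lemma prob_space_cantor_measure: "prob_space cantor_measure"
  unfolding cantor_measure_def by (rule prob_space_PiM) (rule prob_space_measure_pmf)

interpretation cantor_measure: prob_space cantor_measure
  by (rule prob_space_cantor_measure)

lemma space_cantor_measure [simp]: "space cantor_measure = UNIV"
  unfolding cantor_measure_def by (auto simp: space_PiM PiE_def extensional_def)

lemma UNIV_in_sets_cantor_measure [simp]: "UNIV \<in> sets cantor_measure"
  using sets.top[of cantor_measure] by simp

lemma cyl_eq_prod_emb:
  "cyl l = prod_emb UNIV (\<lambda>_. measure_pmf (bernoulli_pmf (1/2))) {..<length l} (\<Pi>\<^sub>E i\<in>{..<length l}. {l ! i})"
  unfolding cyl_def prod_emb_def by (auto simp: PiE_def extensional_def restrict_def space_PiM Pi_def)

lemma cyl_in_sets: "cyl l \<in> sets cantor_measure"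
  unfolding cyl_eq_prod_emb cantor_measure_def by (rule sets_PiM_I) auto

lemma measure_cyl: "measure cantor_measure (cyl l) = (1/2) ^ length l"
proof -
  have "emeasure cantor_measure (cyl l) =
      (\<Prod>i<length l. emeasure (measure_pmf (bernoulli_pmf (1/2))) {l ! i})"
    unfolding cyl_eq_prod_emb cantor_measure_def
    by (rule emeasure_PiM_emb) (auto intro: prob_space_measure_pmf)
  also have "\<dots> = (\<Prod>i<length l. ennreal (1/2))"
    by (simp add: emeasure_pmf_single pmf_bernoulli_half)
  also have "\<dots> = ennreal ((1/2) ^ length l)"
    by (simp only: prod_constant card_lessThan ennreal_power[symmetric])
  finally show ?thesis
    by (simp add: cantor_measure.emeasure_eq_measure)
qed

lemma borel_cantor_subset_sets: "borel_cantor \<subseteq> sets cantor_measure"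
proof -
  have "U \<in> sets cantor_measure" if "openin cantor_top U" for U
    by (subst openin_cantor_top_eq_Union_cyl[OF that])
      (auto intro: sets.countable_UN' cyl_in_sets)
  then have "sigma_sets (space cantor_measure) {U. openin cantor_top U} \<subseteq> sets cantor_measure"
    by (intro sets.sigma_sets_subset) auto
  then show ?thesis
    unfolding borel_cantor_def by simp
qed

lemma null_ideal_iff: "X \<in> sets cantor_measure \<Longrightarrow> X \<in> null_ideal \<longleftrightarrow> X \<in> null_sets cantor_measure"
  unfolding null_ideal_def by (auto intro: null_sets_subset)

lemma null_ideal_subset:
  assumes "A \<in> null_ideal" "B \<subseteq> A"
  shows "B \<in> null_ideal"
proof -
  obtain N where "N \<in> null_sets cantor_measure" "A \<subseteq> N"
    using assms(1) unfolding null_ideal_def by blast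
  with assms(2) show ?thesis
    unfolding null_ideal_def by (intro CollectI bexI[of _ N]) auto
qed

lemma null_ideal_countable_Union:
  assumes "countable F" "F \<subseteq> null_ideal"
  shows "\<Union>F \<in> null_ideal"
proof -
  have "\<forall>A\<in>F. \<exists>N. N \<in> null_sets cantor_measure \<and> A \<subseteq> N"
    using assms(2) unfolding null_ideal_def by blast
  then obtain N where N: "\<forall>A\<in>F. N A \<in> null_sets cantor_measure \<and> A \<subseteq> N A"
    by (rule bchoice[THEN exE])
  have "\<Union>(N ` F) \<in> null_sets cantor_measure"
    using assms(1) N by (intro null_sets_UN') auto
  moreover have "\<Union>F \<subseteq> \<Union>(N ` F)"
    using N by blast
  ultimately show ?thesis
    unfolding null_ideal_def by blast
qed

lemma singleton_in_null_ideal: "{x} \<in> null_ideal"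
proof -
  define N where "N = (\<Inter>n. cyl (map x [0..<n]))"
  have N: "N \<in> sets cantor_measure"
    unfolding N_def by (intro sets.countable_INT'') (auto simp: cyl_in_sets)
  have "measure cantor_measure N \<le> (1/2) ^ n" for n
  proof -
    have "measure cantor_measure N \<le> measure cantor_measure (cyl (map x [0..<n]))"
      unfolding N_def by (intro cantor_measure.finite_measure_mono cyl_in_sets) auto
    then show ?thesis
      by (simp add: measure_cyl)
  qed
  then have "measure cantor_measure N \<le> 0"
    by (intro LIMSEQ_le_const[OF LIMSEQ_power_zero[of "1/2 :: real"]]) auto
  then have "N \<in> null_sets cantor_measure"
    using N by (simp add: cantor_measure.emeasure_eq_measure null_setsI measure_le_0_iff)
  moreover have "x \<in> N"
    unfolding N_def cyl_def by auto
  ultimately show ?thesis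
    unfolding null_ideal_def by blast
qed

lemma UNIV_notin_null_ideal: "UNIV \<notin> null_ideal"
proof
  assume "UNIV \<in> null_ideal"
  then have "emeasure cantor_measure (space cantor_measure) = 0"
    using null_ideal_iff[of UNIV] by auto
  then show False
    using cantor_measure.emeasure_space_1 by simp
qed

text \<open>The supremum of the measures of countable unions from $S$ is attained, because a countable
  union of countable subfamilies is again a countable subfamily.\<close>

lemma (in finite_measure) ex_countable_subfamily_max_measure:
  assumes "S \<subseteq> sets M"
  shows "\<exists>G\<subseteq>S. countable G \<and> (\<forall>H. H \<subseteq> S \<and> countable H \<longrightarrow> measure M (\<Union>H) \<le> measure M (\<Union>G))"
proof -
  define vals where "vals = (\<lambda>F. measure M (\<Union>F)) ` {F. F \<subseteq> S \<and> countable F}"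
  define s where "s = Sup vals"
  have vals_ne: "vals \<noteq> {}"
    unfolding vals_def by blast
  have vals_bdd: "bdd_above vals"
    unfolding vals_def by (rule bdd_aboveI[of _ "measure M (space M)"]) (auto intro: bounded_measure)
  have "\<exists>F. F \<subseteq> S \<and> countable F \<and> s - 1 / Suc n < measure M (\<Union>F)" for n
  proof -
    have "s - 1 / Suc n < Sup vals"
      unfolding s_def by simp
    then have "\<exists>v\<in>vals. s - 1 / Suc n < v"
      using less_cSup_iff[OF vals_ne vals_bdd] by blast
    then show ?thesis
      unfolding vals_def by blast
  qed
  then obtain F where F: "\<And>n. F n \<subseteq> S \<and> countable (F n) \<and> s - 1 / Suc n < measure M (\<Union>(F n))"
    by metis
  define G where "G = (\<Union>n. F n)"
  have G: "G \<subseteq> S" "countable G"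
    using F unfolding G_def by auto
  then have G_sets: "\<Union>G \<in> sets M"
    using assms by (intro sets.countable_Union) auto
  have "s - 1 / Suc n < measure M (\<Union>G)" for n
  proof -
    have "measure M (\<Union>(F n)) \<le> measure M (\<Union>G)"
      using G_sets unfolding G_def by (intro finite_measure_mono) auto
    then show ?thesis
      using F[of n] by linarith
  qed
  moreover have "(\<lambda>n. s - 1 / Suc n) \<longlonglongrightarrow> s"
    using tendsto_diff[OF tendsto_const LIMSEQ_inverse_real_of_nat, of s] by (simp add: inverse_eq_divide)
  ultimately have s_le: "s \<le> measure M (\<Union>G)"
    by (intro LIMSEQ_le_const2[of "\<lambda>n. s - 1 / Suc n"]) (auto intro: less_imp_le)
  have le_s: "measure M (\<Union>H) \<le> s" if "H \<subseteq> S" "countable H" for H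
    unfolding s_def vals_def using that vals_bdd by (intro cSup_upper) (auto simp: vals_def)
  have "\<forall>H. H \<subseteq> S \<and> countable H \<longrightarrow> measure M (\<Union>H) \<le> measure M (\<Union>G)"
    using le_s s_le by (meson order_trans)
  with G show ?thesis
    by blast
qed

lemma (in finite_measure) ex_countable_subfamily_null_Diff:
  assumes "S \<subseteq> sets M"
  shows "\<exists>G\<subseteq>S. countable G \<and> (\<forall>A\<in>S. A - \<Union>G \<in> null_sets M)"
proof -
  from ex_countable_subfamily_max_measure[OF assms] obtain G where G: "G \<subseteq> S" "countable G"
    and G_max: "\<And>H. H \<subseteq> S \<Longrightarrow> countable H \<Longrightarrow> measure M (\<Union>H) \<le> measure M (\<Union>G)"
    by blast
  have G_sets: "\<Union>G \<in> sets M"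
    using G assms by (intro sets.countable_Union) auto
  have "A - \<Union>G \<in> null_sets M" if A: "A \<in> S" for A
  proof -
    have A_sets: "A \<in> sets M"
      using A assms by blast
    have "measure M (\<Union>G) + measure M (A - \<Union>G) = measure M (\<Union>(insert A G))"
      using finite_measure_Union'[OF G_sets A_sets] by (simp add: Un_commute)
    also have "\<dots> \<le> measure M (\<Union>G)"
      using A G by (intro G_max) auto
    finally have "measure M (A - \<Union>G) = 0"
      using measure_nonneg[of M "A - \<Union>G"] by linarith
    then show ?thesis
      using A_sets G_sets by (simp add: emeasure_eq_measure null_setsI)
  qed
  with G show ?thesis
    by blast
qed

lemma ex_lub_mod_null_ideal:
  assumes "S \<subseteq> borel_cantor"
  shows "\<exists>U. is_lub_mod null_ideal S U"
proof -
  have "S \<subseteq> sets cantor_measure"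
    using assms borel_cantor_subset_sets by blast
  from cantor_measure.ex_countable_subfamily_null_Diff[OF this] obtain G
    where G: "G \<subseteq> S" "countable G" "\<forall>A\<in>S. A - \<Union>G \<in> null_sets cantor_measure"
    by (elim exE conjE)
  have "\<Union>G \<in> borel_cantor"
    using G(1,2) assms by (intro borel_cantor.countable_Union) auto
  moreover have "\<forall>A\<in>S. A - \<Union>G \<in> null_ideal"
    using G(3) unfolding null_ideal_def by blast
  moreover have "\<Union>G - B \<in> null_ideal" if B: "\<forall>A\<in>S. A - B \<in> null_ideal" for B
  proof -
    have "\<Union>G - B = \<Union>((\<lambda>A. A - B) ` G)"
      by blast
    also have "\<dots> \<in> null_ideal"
      using B G(1,2) by (intro null_ideal_countable_Union) auto
    finally show ?thesis .
  qed
  ultimately show ?thesis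
    unfolding is_lub_mod_def by blast
qed

lemma inj_rat_cut: "inj (\<lambda>(r :: real) n. real_of_rat (from_nat n) < r)"
proof (rule injI, rule ccontr)
  fix r s :: real
  assume cuts: "(\<lambda>n. real_of_rat (from_nat n) < r) = (\<lambda>n. real_of_rat (from_nat n) < s)" and "r \<noteq> s"
  then have "min r s < max r s"
    by (auto simp: min_def max_def)
  then obtain q where "min r s < real_of_rat q" "real_of_rat q < max r s"
    using of_rat_dense by blast
  moreover have "(real_of_rat q < r) = (real_of_rat q < s)"
    using fun_cong[OF cuts, of "to_nat q"] by simp
  ultimately show False
    by (auto simp: min_def max_def split: if_splits)
qed

lemma (in finite_measure) null_Diff_if_measure_eq:
  assumes "A \<in> sets M" "B \<in> sets M" "A - B \<in> null_sets M" "measure M A = measure M B"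
  shows "B - A \<in> null_sets M"
proof -
  have "measure M (A \<union> B) = measure M A + measure M (B - A)"
    "measure M (A \<union> B) = measure M B + measure M (A - B)"
    using finite_measure_Union'[OF assms(1,2)] finite_measure_Union'[OF assms(2,1)]
    by (simp_all add: Un_commute)
  then have "measure M (B - A) = 0"
    using assms(3,4) by (simp add: measure_eq_0_null_sets)
  then show ?thesis
    using assms(1,2) by (simp add: emeasure_eq_measure null_setsI)
qed

lemma ex_comparable_code_null_ideal:
  "\<exists>h :: (nat \<Rightarrow> bool) set \<Rightarrow> nat \<Rightarrow> bool. \<forall>A\<in>borel_cantor. \<forall>B\<in>borel_cantor.
     (A - B \<in> null_ideal \<or> B - A \<in> null_ideal) \<longrightarrow> h A = h B \<longrightarrow>
       A - B \<in> null_ideal \<and> B - A \<in> null_ideal"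
proof (intro exI ballI impI)
  fix A B assume A: "A \<in> borel_cantor" and B: "B \<in> borel_cantor"
    and comparable: "A - B \<in> null_ideal \<or> B - A \<in> null_ideal"
    and "(\<lambda>n. real_of_rat (from_nat n) < measure cantor_measure A) =
         (\<lambda>n. real_of_rat (from_nat n) < measure cantor_measure B)"
  then have "measure cantor_measure A = measure cantor_measure B"
    using inj_rat_cut by (auto dest: injD)
  moreover have "A \<in> sets cantor_measure" "B \<in> sets cantor_measure"
    using A B borel_cantor_subset_sets by auto
  ultimately show "A - B \<in> null_ideal \<and> B - A \<in> null_ideal"
    using comparable null_ideal_iff cantor_measure.null_Diff_if_measure_eq by (metis sets.Diff)
qed

lemma cantor_quotient_null_ideal: "cantor_quotient null_ideal"
  by unfold_locales
    (fact null_ideal_subset null_ideal_countable_Union singleton_in_null_ideal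
      UNIV_notin_null_ideal ex_lub_mod_null_ideal ex_comparable_code_null_ideal)+

section \<open>The meager ideal\<close>

lemma compact_space_cantor_top: "compact_space cantor_top"
  unfolding cantor_top_def compact_space_product_topology by (auto simp: compact_space_discrete_topology)

lemma Hausdorff_space_cantor_top: "Hausdorff_space cantor_top"
  unfolding cantor_top_def Hausdorff_space_product_topology by simp

lemma meager_ideal_subset:
  assumes "A \<in> meager_ideal" "B \<subseteq> A"
  shows "B \<in> meager_ideal"
proof -
  obtain F where "countable F" "\<forall>N\<in>F. nowhere_dense N" "A \<subseteq> \<Union>F"
    using assms(1) unfolding meager_ideal_def by blast
  with assms(2) show ?thesis
    unfolding meager_ideal_def by (intro CollectI exI[of _ F]) auto
qed

lemma meager_ideal_countable_Union:
  assumes "countable F" "F \<subseteq> meager_ideal"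
  shows "\<Union>F \<in> meager_ideal"
proof -
  have "\<forall>A\<in>F. \<exists>G. countable G \<and> (\<forall>N\<in>G. nowhere_dense N) \<and> A \<subseteq> \<Union>G"
    using assms(2) unfolding meager_ideal_def by blast
  then obtain G where G: "\<forall>A\<in>F. countable (G A) \<and> (\<forall>N\<in>G A. nowhere_dense N) \<and> A \<subseteq> \<Union>(G A)"
    by (rule bchoice[THEN exE])
  have "countable (\<Union>(G ` F))" "\<forall>N\<in>\<Union>(G ` F). nowhere_dense N"
    using assms(1) G by auto
  moreover have "\<Union>F \<subseteq> \<Union>(\<Union>(G ` F))"
    using G by blast
  ultimately show ?thesis
    unfolding meager_ideal_def by (intro CollectI exI[of _ "\<Union>(G ` F)"] conjI)
qed

lemma meager_ideal_Un: "A \<in> meager_ideal \<Longrightarrow> B \<in> meager_ideal \<Longrightarrow> A \<union> B \<in> meager_ideal"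
  using meager_ideal_countable_Union[of "{A, B}"] by auto

lemma meager_if_closed_empty_interior:
  assumes "closedin cantor_top N" "cantor_top interior_of N = {}"
  shows "N \<in> meager_ideal"
proof -
  have "nowhere_dense N"
    unfolding nowhere_dense_def using assms by (simp add: closure_of_closedin)
  then show ?thesis
    unfolding meager_ideal_def by (intro CollectI exI[of _ "{N}"]) auto
qed

lemma singleton_in_meager_ideal: "{x} \<in> meager_ideal"
proof (rule meager_if_closed_empty_interior)
  show "closedin cantor_top {x}"
    using closedin_Hausdorff_singleton[OF Hausdorff_space_cantor_top] by simp
  have "openin cantor_top (cantor_top interior_of {x})"
    by (rule openin_interior_of)
  then have "cantor_top interior_of {x} \<noteq> {x}"
    using not_openin_singleton[of x] by metis
  then show "cantor_top interior_of {x} = {}"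
    using interior_of_subset[of cantor_top "{x}"] by blast
qed

lemma closure_of_Diff_in_meager_ideal:
  assumes "openin cantor_top U"
  shows "cantor_top closure_of U - U \<in> meager_ideal"
proof (rule meager_if_closed_empty_interior)
  show "closedin cantor_top (cantor_top closure_of U - U)"
    using assms by (intro closedin_diff) auto
  let ?O = "cantor_top interior_of (cantor_top closure_of U - U)"
  have O_sub: "?O \<subseteq> cantor_top closure_of U - U"
    by (rule interior_of_subset)
  then have "?O \<inter> U = {}"
    by blast
  then have "?O \<inter> cantor_top closure_of U = {}"
    using openin_Int_closure_of_eq_empty[of cantor_top ?O U] openin_interior_of by simp
  with O_sub show "?O = {}"
    by blast
qed

lemma Baire_cantor_top:
  assumes "countable G" "\<And>T. T \<in> G \<Longrightarrow> closedin cantor_top T \<and> cantor_top interior_of T = {}"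
  shows "cantor_top interior_of \<Union>G = {}"
  using Baire_category_alt[OF _ assms] compact_space_cantor_top Hausdorff_space_cantor_top
    compact_imp_locally_compact_space compact_Hausdorff_imp_regular_space by blast

lemma openin_meager_imp_empty:
  assumes "openin cantor_top U" "U \<in> meager_ideal"
  shows "U = {}"
proof -
  obtain F where F: "countable F" "\<forall>N\<in>F. nowhere_dense N" "U \<subseteq> \<Union>F"
    using assms(2) unfolding meager_ideal_def by blast
  let ?G = "(\<lambda>N. cantor_top closure_of N) ` F"
  have "cantor_top interior_of \<Union>?G = {}"
    by (rule Baire_cantor_top) (use F in \<open>auto simp: nowhere_dense_def\<close>)
  moreover have "\<Union>F \<subseteq> \<Union>?G"
    using closure_of_subset[of _ cantor_top] by fastforce
  with F(3) have "U \<subseteq> cantor_top interior_of \<Union>?G"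
    using assms(1) by (intro interior_of_maximal) auto
  ultimately show ?thesis
    by blast
qed

lemma UNIV_notin_meager_ideal: "UNIV \<notin> meager_ideal"
  using openin_meager_imp_empty[of UNIV] openin_topspace[of cantor_top] by auto

lemma empty_in_meager_ideal [simp]: "{} \<in> meager_ideal"
  unfolding meager_ideal_def by blast

lemma ex_openin_mod_meager:
  assumes "A \<in> borel_cantor"
  shows "\<exists>U. openin cantor_top U \<and> (A - U) \<union> (U - A) \<in> meager_ideal"
  using assms unfolding borel_cantor_def
proof (induction rule: sigma_sets.induct)
  case (Basic a)
  then show ?case
    by (intro exI[of _ a]) simp
next
  case Empty
  show ?case
    by (intro exI[of _ "{}"]) simp
next
  case (Compl a)
  then obtain U where U: "openin cantor_top U" "(a - U) \<union> (U - a) \<in> meager_ideal"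
    by blast
  let ?V = "UNIV - cantor_top closure_of U"
  have "openin cantor_top ?V"
    using openin_diff[OF openin_topspace closedin_closure_of, of cantor_top U] by simp
  moreover have "((a - U) \<union> (U - a)) \<union> (cantor_top closure_of U - U) \<in> meager_ideal"
    by (rule meager_ideal_Un[OF U(2) closure_of_Diff_in_meager_ideal[OF U(1)]])
  moreover have "((UNIV - a) - ?V) \<union> (?V - (UNIV - a)) \<subseteq> ((a - U) \<union> (U - a)) \<union> (cantor_top closure_of U - U)"
    using closure_of_subset[of U cantor_top] by auto
  ultimately show ?case
    by (blast intro: meager_ideal_subset)
next
  case (Union A)
  then have "\<forall>i. \<exists>U. openin cantor_top U \<and> (A i - U) \<union> (U - A i) \<in> meager_ideal"
    by blast
  then obtain U where U: "\<forall>i. openin cantor_top (U i) \<and> (A i - U i) \<union> (U i - A i) \<in> meager_ideal"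
    by (rule choice[THEN exE])
  have "openin cantor_top (\<Union>i. U i)"
    using U by (intro openin_Union) auto
  moreover have "(\<Union>i. (A i - U i) \<union> (U i - A i)) \<in> meager_ideal"
    using U by (intro meager_ideal_countable_Union) auto
  moreover have "((\<Union>i. A i) - (\<Union>i. U i)) \<union> ((\<Union>i. U i) - (\<Union>i. A i)) \<subseteq> (\<Union>i. (A i - U i) \<union> (U i - A i))"
    by blast
  ultimately show ?case
    by (blast intro: meager_ideal_subset)
qed

text \<open>$R - \overline{W}$ is open and meager, hence empty by the Baire category theorem.\<close>

lemma openin_subset_closure_of_if_le_mod_meager:
  assumes R: "openin cantor_top R" "(A - R) \<union> (R - A) \<in> meager_ideal"
    and AB: "A - B \<in> meager_ideal" and W: "(B - W) \<union> (W - B) \<in> meager_ideal"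
  shows "R \<subseteq> cantor_top closure_of W"
proof -
  have "((A - R) \<union> (R - A)) \<union> (A - B) \<union> ((B - W) \<union> (W - B)) \<in> meager_ideal"
    using R(2) AB W by (blast intro: meager_ideal_Un)
  moreover have "R - cantor_top closure_of W \<subseteq> ((A - R) \<union> (R - A)) \<union> (A - B) \<union> ((B - W) \<union> (W - B))"
    using closure_of_subset[of W cantor_top] by auto
  ultimately have "R - cantor_top closure_of W \<in> meager_ideal"
    by (rule meager_ideal_subset)
  moreover have "openin cantor_top (R - cantor_top closure_of W)"
    using R(1) by (intro openin_diff) auto
  ultimately show ?thesis
    using openin_meager_imp_empty by blast
qed

lemma ex_lub_mod_meager_ideal:
  assumes S: "S \<subseteq> borel_cantor"
  shows "\<exists>U. is_lub_mod meager_ideal S U"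
proof -
  have "\<forall>A\<in>S. \<exists>U. openin cantor_top U \<and> (A - U) \<union> (U - A) \<in> meager_ideal"
    using S ex_openin_mod_meager by blast
  then obtain R where R: "\<forall>A\<in>S. openin cantor_top (R A) \<and> (A - R A) \<union> (R A - A) \<in> meager_ideal"
    by (rule bchoice[THEN exE])
  define V where "V = \<Union>(R ` S)"
  have "V \<in> borel_cantor"
    unfolding V_def using R by (intro openin_imp_borel_cantor openin_Union) auto
  moreover have "A - V \<in> meager_ideal" if "A \<in> S" for A
    using R that unfolding V_def by (blast intro: meager_ideal_subset)
  moreover have "V - B \<in> meager_ideal" if B: "B \<in> borel_cantor" "\<forall>A\<in>S. A - B \<in> meager_ideal" for B
  proof -
    obtain W where W: "openin cantor_top W" "(B - W) \<union> (W - B) \<in> meager_ideal"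
      using ex_openin_mod_meager[OF B(1)] by blast
    have "R A \<subseteq> cantor_top closure_of W" if "A \<in> S" for A
      using R B(2) W that by (intro openin_subset_closure_of_if_le_mod_meager[of _ A B]) auto
    then have "V - B \<subseteq> (cantor_top closure_of W - W) \<union> ((B - W) \<union> (W - B))"
      unfolding V_def by blast
    moreover have "(cantor_top closure_of W - W) \<union> ((B - W) \<union> (W - B)) \<in> meager_ideal"
      by (rule meager_ideal_Un[OF closure_of_Diff_in_meager_ideal[OF W(1)] W(2)])
    ultimately show ?thesis
      by (rule meager_ideal_subset[rotated])
  qed
  ultimately show ?thesis
    unfolding is_lub_mod_def by blast
qed

lemma inj_on_cyl_code: "inj_on (\<lambda>U n. cyl (from_nat n) \<subseteq> U) {U. openin cantor_top U}"
proof (rule inj_onI)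
  fix U V assume U: "U \<in> {U. openin cantor_top U}" and V: "V \<in> {U. openin cantor_top U}"
    and codes: "(\<lambda>n. cyl (from_nat n) \<subseteq> U) = (\<lambda>n. cyl (from_nat n) \<subseteq> V)"
  have "cyl l \<subseteq> U \<longleftrightarrow> cyl l \<subseteq> V" for l
    using fun_cong[OF codes, of "to_nat l"] by simp
  then show "U = V"
    using openin_cantor_top_eq_Union_cyl[of U] openin_cantor_top_eq_Union_cyl[of V] U V by simp
qed

lemma ex_comparable_code_meager_ideal:
  "\<exists>h :: (nat \<Rightarrow> bool) set \<Rightarrow> nat \<Rightarrow> bool. \<forall>A\<in>borel_cantor. \<forall>B\<in>borel_cantor.
     (A - B \<in> meager_ideal \<or> B - A \<in> meager_ideal) \<longrightarrow> h A = h B \<longrightarrow>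
       A - B \<in> meager_ideal \<and> B - A \<in> meager_ideal"
proof -
  define rep where "rep A = (SOME U. openin cantor_top U \<and> (A - U) \<union> (U - A) \<in> meager_ideal)" for A
  have rep: "openin cantor_top (rep A) \<and> (A - rep A) \<union> (rep A - A) \<in> meager_ideal"
    if "A \<in> borel_cantor" for A
    unfolding rep_def by (rule someI_ex) (rule ex_openin_mod_meager[OF that])
  have code: "A - B \<in> meager_ideal \<and> B - A \<in> meager_ideal"
    if A: "A \<in> borel_cantor" and B: "B \<in> borel_cantor"
      and "(\<lambda>n. cyl (from_nat n) \<subseteq> rep A) = (\<lambda>n. cyl (from_nat n) \<subseteq> rep B)" for A B
  proof -
    have "rep A = rep B"
      using inj_onD[OF inj_on_cyl_code that(3)] rep[OF A] rep[OF B] by simp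
    then have sym_diffs: "((A - rep A) \<union> (rep A - A)) \<union> ((B - rep A) \<union> (rep A - B)) \<in> meager_ideal"
      using rep[OF A] rep[OF B] meager_ideal_Un by simp
    show ?thesis
      using meager_ideal_subset[OF sym_diffs, of "A - B"] meager_ideal_subset[OF sym_diffs, of "B - A"]
      by blast
  qed
  show ?thesis
    by (rule exI[of _ "\<lambda>A n. cyl (from_nat n) \<subseteq> rep A"]) (use code in blast)
qed

lemma cantor_quotient_meager_ideal: "cantor_quotient meager_ideal"
  by unfold_locales
    (fact meager_ideal_subset meager_ideal_countable_Union singleton_in_meager_ideal
      UNIV_notin_meager_ideal ex_lub_mod_meager_ideal ex_comparable_code_meager_ideal)+

theorem mainTheorem8:
  shows "mc_equals (quot_minus null_ideal) (quot_le null_ideal) (UNIV :: (nat \<Rightarrow> bool) set)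
       \<and> mc_equals (quot_minus meager_ideal) (quot_le meager_ideal) (UNIV :: (nat \<Rightarrow> bool) set)"
  using cantor_quotient.mc_equals_continuum[OF cantor_quotient_null_ideal]
    cantor_quotient.mc_equals_continuum[OF cantor_quotient_meager_ideal] by blast

end
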